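(* Let $k\ge 2$, $w=2^k-1$, $v=2^{k-1}$. Consider a line of $w$ cells indexed $0,\dots,w-1$, all empty except the middle cell $v-1$, on which the frog stands. For $j\ge1$ let $\tilde U_j$ be the sequence of jump lengths consisting of $2^j-1$ jumps of length $1$ followed by one jump of length $2^j+2^{j-1}-1$. Consider the fixed sequence $\tilde U_{k-1},\tilde U_{k-2},\dots,\tilde U_2,\tilde U_1$. Then every valid execution of this sequence visits every cell of the line exactly once and ends on a cell with even index, and for every even index $p\in\{0,2,\dots,w-1\}$ there is a valid execution ending on cell $p$.
   Context: A frog on a line of cells performs a given sequence of positive jump lengths; for each jump it chooses a direction, moving from position $q$ to $q+J$ or $q-J$. An execution is valid if every landing cell lies on the line, is not blocked, and has not been visited before (the starting cell counts as visited). Cells are indexed from $0$. *)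

theory Defs
  imports Main
begin

fun frog_path :: "int \<Rightarrow> nat list \<Rightarrow> bool list \<Rightarrow> int list" where
  "frog_path q [] ds = [q]"
| "frog_path q (J # Js) [] = [q]"
| "frog_path q (J # Js) (d # ds) =
     q # frog_path (if d then q + int J else q - int J) Js ds"

definition valid_exec :: "nat \<Rightarrow> int set \<Rightarrow> int \<Rightarrow> nat list \<Rightarrow> bool list \<Rightarrow> bool" where
  "valid_exec w B s Js ds \<longleftrightarrow>
     length ds = length Js \<and>
     (\<forall>p \<in> set (tl (frog_path s Js ds)). 0 \<le> p \<and> p < int w \<and> p \<notin> B) \<and>
     distinct (frog_path s Js ds)"

definition Ublock :: "nat \<Rightarrow> nat list" where
  "Ublock j = replicate (2 ^ j - 1) 1 @ [2 ^ j + 2 ^ (j - 1) - 1]"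

definition frog_seq :: "nat \<Rightarrow> nat list" where
  "frog_seq k = concat (map Ublock (rev [1..<k]))"

end

theory Submission
  imports Defs
begin

text \<open>Let the frog stand in the middle of an otherwise empty line of \<open>4h - 1\<close> cells and perform
  the block of \<open>2h - 1\<close> unit jumps followed by a jump of length \<open>3h - 1\<close>. After the first
  unit jump the cell just left is visited, so the frog is forced to keep walking in the same
  direction up to the end of the line; the long jump then cannot leave the line and lands exactly
  in the middle of the untouched half, a free line of \<open>2h - 1\<close> cells. So each block halves the
  line, keeping either half at will, and by induction on the number of blocks the line is
  eventually full, with the frog on any cell of even index.\<close>

text \<open>\<open>W\<close> is the set of cells still available for landing. The result is the set of cells
  left free together with the final position, or \<open>None\<close> if the execution is invalid.\<close>

fun frog_run :: "int set \<Rightarrow> int \<Rightarrow> nat list \<Rightarrow> bool list \<Rightarrow> (int set \<times> int) option" where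
  "frog_run W q [] [] = Some (W, q)"
| "frog_run W q (J # Js) (d # ds) =
     (let q' = if d then q + int J else q - int J in
      if q' \<in> W then frog_run (W - {q'}) q' Js ds else None)"
| "frog_run W q _ _ = None"

definition frog_outcomes :: "int set \<Rightarrow> int \<Rightarrow> nat list \<Rightarrow> (int set \<times> int) set" where
  "frog_outcomes W q Js = {x. \<exists>ds. frog_run W q Js ds = Some x}"

lemma frog_path_eq_Cons: "frog_path q Js ds = q # tl (frog_path q Js ds)"
  by (cases "(q, Js, ds)" rule: frog_path.cases) auto

lemma frog_run_free_subset: "frog_run W q Js ds = Some (W', q') \<Longrightarrow> W' \<subseteq> W"
  by (induction W q Js ds rule: frog_run.induct) (auto simp: Let_def split: if_splits)

lemma frog_run_eq_None_iff:
  assumes "q \<notin> W"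
  shows "frog_run W q Js ds \<noteq> None \<longleftrightarrow>
    length ds = length Js \<and> set (tl (frog_path q Js ds)) \<subseteq> W \<and> distinct (frog_path q Js ds)"
  using assms
proof (induction W q Js ds rule: frog_run.induct)
  case (2 W q J Js d ds)
  define q' where "q' = (if d then q + int J else q - int J)"
  obtain t where path: "frog_path q' Js ds = q' # t" using frog_path_eq_Cons by blast
  show ?case
  proof (cases "q' \<in> W")
    case True
    with "2.IH"[of q', folded q'_def] have
      "frog_run (W - {q'}) q' Js ds \<noteq> None \<longleftrightarrow>
       length ds = length Js \<and> set (tl (frog_path q' Js ds)) \<subseteq> W - {q'} \<and> distinct (frog_path q' Js ds)"
      by (simp add: q'_def)
    with True "2.prems" path show ?thesis by (auto simp: Let_def q'_def[symmetric])
  next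
    case False
    with path show ?thesis by (simp add: Let_def q'_def[symmetric])
  qed
qed auto

lemma frog_run_path:
  "frog_run W q Js ds = Some (W', q') \<Longrightarrow> q \<notin> W \<Longrightarrow>
    set (frog_path q Js ds) = insert q (W - W') \<and> last (frog_path q Js ds) = q'"
proof (induction W q Js ds rule: frog_run.induct)
  case (2 W q J Js d ds)
  define r where "r = (if d then q + int J else q - int J)"
  obtain t where path: "frog_path r Js ds = r # t" using frog_path_eq_Cons by blast
  from "2.prems" have r: "r \<in> W" and run: "frog_run (W - {r}) r Js ds = Some (W', q')"
    by (auto simp: Let_def r_def[symmetric] split: if_splits)
  with "2.IH"[of r, folded r_def] frog_run_free_subset[OF run] "2.prems"(2) path
  show ?case by (auto simp: r_def[symmetric])
qed auto

lemma valid_exec_iff_frog_run: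
  "valid_exec w B s Js ds \<longleftrightarrow> frog_run ({0..<int w} - B - {s}) s Js ds \<noteq> None"
proof -
  obtain t where "frog_path s Js ds = s # t" using frog_path_eq_Cons by blast
  with frog_run_eq_None_iff[of s "{0..<int w} - B - {s}" Js ds]
  show ?thesis unfolding valid_exec_def by auto
qed

lemma frog_outcomes_Nil [simp]: "frog_outcomes W q [] = {(W, q)}"
proof -
  have "frog_run W q [] ds = Some x \<longleftrightarrow> ds = [] \<and> x = (W, q)" for ds x
    by (cases ds) auto
  then show ?thesis by (auto simp: frog_outcomes_def)
qed

lemma frog_outcomes_Cons [simp]:
  "frog_outcomes W q (J # Js) =
    (\<Union>q' \<in> {q + int J, q - int J} \<inter> W. frog_outcomes (W - {q'}) q' Js)"
proof -
  have "frog_run W q (J # Js) ds = Some x \<longleftrightarrow>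
      (\<exists>d ds'. ds = d # ds' \<and> (if d then q + int J else q - int J) \<in> W \<and>
        frog_run (W - {if d then q + int J else q - int J}) (if d then q + int J else q - int J) Js ds' = Some x)"
    for ds x by (cases ds) (auto simp: Let_def)
  then show ?thesis
    unfolding frog_outcomes_def by (auto split: if_splits)
qed

lemma frog_outcomes_append:
  "frog_outcomes W q (Js @ Ks) = (\<Union>(W', q') \<in> frog_outcomes W q Js. frog_outcomes W' q' Ks)"
  by (induction Js arbitrary: W q) auto

lemma frog_outcomes_unit_walk_right:
  assumes "c \<notin> W" "c - 1 \<notin> W"
  shows "frog_outcomes W c (replicate m 1) =
    (if {c+1..c + int m} \<subseteq> W then {(W - {c+1..c + int m}, c + int m)} else {})"
  using assms
proof (induction m arbitrary: c W)
  case (Suc m)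
  have step: "frog_outcomes W c (replicate (Suc m) 1) =
      (if c + 1 \<in> W then frog_outcomes (W - {c+1}) (c+1) (replicate m 1) else {})"
    using Suc.prems by auto
  have "{c+1..c + int (Suc m)} = insert (c+1) {c+1+1..c+1 + int m}" by auto
  then show ?case
    unfolding step using Suc.IH[of "c+1" "W - {c+1}"] Suc.prems by (auto simp: ac_simps)
qed simp

lemma frog_outcomes_unit_walk_left:
  assumes "c \<notin> W" "c + 1 \<notin> W"
  shows "frog_outcomes W c (replicate m 1) =
    (if {c - int m..c-1} \<subseteq> W then {(W - {c - int m..c-1}, c - int m)} else {})"
  using assms
proof (induction m arbitrary: c W)
  case (Suc m)
  have step: "frog_outcomes W c (replicate (Suc m) 1) =
      (if c - 1 \<in> W then frog_outcomes (W - {c-1}) (c-1) (replicate m 1) else {})"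
    using Suc.prems by auto
  have "{c - int (Suc m)..c-1} = insert (c-1) {c-1 - int m..c-1-1}" by auto
  then show ?case
    unfolding step using Suc.IH[of "c-1" "W - {c-1}"] Suc.prems by (auto simp: algebra_simps)
qed simp

text \<open>The line of \<open>2n - 1\<close> cells starting at \<open>a\<close> with the frog standing on its midpoint.\<close>

definition punctured_line :: "int \<Rightarrow> int \<Rightarrow> int set" where
  "punctured_line a n = {a..a + 2*n - 2} - {a + n - 1}"

lemma frog_outcomes_block:
  fixes h :: nat and a :: int
  assumes "h \<ge> 1"
  shows "frog_outcomes (punctured_line a (2 * int h)) (a + 2 * int h - 1)
      (replicate (2*h - 1) 1 @ [3*h - 1]) =
    {(punctured_line a (int h), a + int h - 1),
     (punctured_line (a + 2 * int h) (int h), a + 3 * int h - 1)}"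
proof -
  define H where "H = int h"
  define W where "W = punctured_line a (2*H)"
  define c where "c = a + 2*H - 1"
  have H: "H \<ge> 1" "int (2*h - 2) = 2*H - 2" "int (3*h - 1) = 3*H - 1"
    using assms by (auto simp: H_def)
  have walk: "replicate (2*h - 1) 1 = 1 # replicate (2*h - 2) (1::nat)"
    using assms by (cases h) auto
  have first: "{c + 1, c - 1} \<inter> W = {c + 1, c - 1}"
    using H by (auto simp: W_def c_def punctured_line_def)
  have right: "frog_outcomes (W - {c + 1}) (c + 1) (replicate (2*h - 2) 1) =
      {({a..a + 2*H - 2}, a + 4*H - 2)}"
    using H by (subst frog_outcomes_unit_walk_right) (auto simp: W_def c_def punctured_line_def)
  have left: "frog_outcomes (W - {c - 1}) (c - 1) (replicate (2*h - 2) 1) =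
      {({a + 2*H..a + 4*H - 2}, a)}"
    using H by (subst frog_outcomes_unit_walk_left) (auto simp: W_def c_def punctured_line_def)
  have jump_left: "frog_outcomes {a..a + 2*H - 2} (a + 4*H - 2) [3*h - 1] =
      {(punctured_line a H, a + H - 1)}"
    using H by (auto simp: punctured_line_def)
  have jump_right: "frog_outcomes {a + 2*H..a + 4*H - 2} a [3*h - 1] =
      {(punctured_line (a + 2*H) H, a + 3*H - 1)}"
    using H by (auto simp: punctured_line_def)
  have "frog_outcomes W c (1 # replicate (2*h - 2) 1 @ [3*h - 1]) =
      frog_outcomes (W - {c + 1}) (c + 1) (replicate (2*h - 2) 1 @ [3*h - 1]) \<union>
      frog_outcomes (W - {c - 1}) (c - 1) (replicate (2*h - 2) 1 @ [3*h - 1])"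
    by (simp only: frog_outcomes_Cons first of_nat_1) auto
  also have "\<dots> = {(punctured_line a H, a + H - 1), (punctured_line (a + 2*H) H, a + 3*H - 1)}"
    unfolding frog_outcomes_append right left
    by (simp del: frog_outcomes_Cons One_nat_def add: jump_left jump_right insert_commute)
  finally show ?thesis
    unfolding walk H_def[symmetric] W_def[symmetric] c_def[symmetric] by simp
qed

lemma Ublock_Suc: "Ublock (Suc j) = replicate (2 * 2^j - 1) 1 @ [3 * 2^j - 1]"
  by (simp add: Ublock_def)

lemma frog_seq_Suc_Suc: "frog_seq (Suc (Suc j)) = Ublock (Suc j) @ frog_seq (Suc j)"
  by (simp add: frog_seq_def)

lemma even_cells_split:
  fixes a h :: int
  assumes "h \<ge> 1"
  shows "{p \<in> {a..a + 2*h - 2}. even (p - a)} \<union> {p \<in> {a + 2*h..a + 4*h - 2}. even (p - (a + 2*h))} =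
    {p \<in> {a..a + 4*h - 2}. even (p - a)}"
proof -
  have "even (p - (a + 2*h)) \<longleftrightarrow> even (p - a)" for p
    by (simp add: algebra_simps)
  moreover have "\<not> even (a + 2*h - 1 - a)" by simp
  ultimately show ?thesis by (auto simp del: even_diff) (smt (verit))
qed

lemma frog_outcomes_frog_seq:
  "frog_outcomes (punctured_line a (2^j)) (a + 2^j - 1) (frog_seq (Suc j)) =
    (\<lambda>p. ({}, p)) ` {p \<in> {a..a + 2 * 2^j - 2}. even (p - a)}"
proof (induction j arbitrary: a)
  case 0
  then show ?case by (auto simp: frog_seq_def punctured_line_def)
next
  case (Suc j)
  define h :: nat where "h = 2^j"
  have h: "h \<ge> 1" "(2::int)^j = int h" by (simp_all add: h_def)
  have "frog_outcomes (punctured_line a (2^Suc j)) (a + 2^Suc j - 1) (frog_seq (Suc (Suc j))) =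
      frog_outcomes (punctured_line a (int h)) (a + int h - 1) (frog_seq (Suc j)) \<union>
      frog_outcomes (punctured_line (a + 2 * int h) (int h)) (a + 3 * int h - 1) (frog_seq (Suc j))"
    using frog_outcomes_block[OF h(1), of a]
    unfolding frog_seq_Suc_Suc frog_outcomes_append[of _ _ "Ublock (Suc j)"]
    by (simp add: Ublock_Suc h h_def[symmetric] del: frog_outcomes_Cons)
  also have "\<dots> = (\<lambda>p. ({}, p)) ` {p \<in> {a..a + 4 * int h - 2}. even (p - a)}"
    using Suc.IH[of a] Suc.IH[of "a + 2 * int h"] even_cells_split[of "int h" a] h
    by (simp add: image_Un[symmetric] algebra_simps)
  finally show ?case by (simp add: h)
qed

lemma valid_exec_fill_line:
  assumes "s \<in> {0..<int w}"
    and outcomes: "frog_outcomes ({0..<int w} - {s}) s Js = (\<lambda>p. ({}, p)) ` P"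
  shows "(\<forall>ds. valid_exec w {} s Js ds \<longrightarrow>
            distinct (frog_path s Js ds) \<and> set (frog_path s Js ds) = {0..<int w} \<and>
            last (frog_path s Js ds) \<in> P)
       \<and> (\<forall>p \<in> P. \<exists>ds. valid_exec w {} s Js ds \<and> last (frog_path s Js ds) = p)"
proof -
  define W where "W = {0..<int w} - {s}"
  have path: "frog_run W s Js ds = Some ({}, p) \<Longrightarrow>
      set (frog_path s Js ds) = {0..<int w} \<and> last (frog_path s Js ds) = p" for ds p
    using frog_run_path[of W s Js ds "{}" p] assms(1) unfolding W_def by auto
  have valid: "valid_exec w {} s Js ds \<longleftrightarrow> frog_run W s Js ds \<noteq> None" for ds
    using valid_exec_iff_frog_run[of w "{}" s Js ds] unfolding W_def by simp
  show ?thesis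
  proof (rule conjI; intro allI ballI impI)
    fix ds assume valid_ds: "valid_exec w {} s Js ds"
    then obtain x where run: "frog_run W s Js ds = Some x"
      using valid by blast
    with outcomes obtain p where "x = ({}, p)" "p \<in> P"
      unfolding frog_outcomes_def W_def by blast
    with run valid_ds path show "distinct (frog_path s Js ds) \<and>
        set (frog_path s Js ds) = {0..<int w} \<and> last (frog_path s Js ds) \<in> P"
      by (auto simp: valid_exec_def)
  next
    fix p assume "p \<in> P"
    then obtain ds where "frog_run W s Js ds = Some ({}, p)"
      using outcomes unfolding frog_outcomes_def W_def by blast
    with path valid show "\<exists>ds. valid_exec w {} s Js ds \<and> last (frog_path s Js ds) = p"
      by blast
  qed
qed

theorem mainTheorem7:
  fixes k w v :: nat
  assumes "k \<ge> 2" and "w = 2 ^ k - 1" and "v = 2 ^ (k - 1)"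
  shows "(\<forall>ds. valid_exec w {} (int v - 1) (frog_seq k) ds \<longrightarrow>
            distinct (frog_path (int v - 1) (frog_seq k) ds) \<and>
            set (frog_path (int v - 1) (frog_seq k) ds) = {0..<int w} \<and>
            even (last (frog_path (int v - 1) (frog_seq k) ds)))
       \<and> (\<forall>p::int. 0 \<le> p \<and> p < int w \<and> even p \<longrightarrow>
            (\<exists>ds. valid_exec w {} (int v - 1) (frog_seq k) ds \<and>
                  last (frog_path (int v - 1) (frog_seq k) ds) = p))"
proof -
  obtain j where k: "k = Suc j" using assms(1) by (cases k) auto
  have w: "int w = 2 * 2^j - 1" using assms(2) by (simp add: k of_nat_diff)
  have s: "int v - 1 = 0 + 2^j - 1" using assms(3) by (simp add: k)
  have "{0..<int w} - {int v - 1} = punctured_line 0 (2^j)"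
    unfolding w s punctured_line_def by auto
  moreover have "{p \<in> {0..0 + 2 * 2^j - 2}. even (p - 0)} = {p. 0 \<le> p \<and> p < int w \<and> even p}"
    unfolding w by auto
  ultimately have outcomes: "frog_outcomes ({0..<int w} - {int v - 1}) (int v - 1) (frog_seq k) =
      (\<lambda>p. ({}, p)) ` {p. 0 \<le> p \<and> p < int w \<and> even p}"
    using frog_outcomes_frog_seq[of 0 j] unfolding s k by simp
  have "int v - 1 \<in> {0..<int w}" unfolding w s by simp
  from valid_exec_fill_line[OF this outcomes] show ?thesis by simp
qed

end
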